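(* Let $G$ be a group, $E$ a real Banach space, and $f\colon G\to E$ such that $\|f(xy)+f(xy^{-1})-2f(x)\|\le c$ for all $x,y\in G$, where $c>0$. Then the function $\hat f(x)=\lim_{k\to\infty}\frac{1}{2^k}f(x^{2^k})$ is well-defined, it is a $(G;E)$-pseudo-Jensen function, and $\|\hat f(x)-f(x)\|\le c+\|f(1)\|$ for all $x\in G$.
   Context: A function $g\colon G\to E$ is $(G;E)$-pseudo-Jensen if there is $d>0$ with $\|g(xy)+g(xy^{-1})-2g(x)\|\le d$ for all $x,y\in G$, and $g(x^n)=ng(x)$ for all $x\in G$, $n\in\mathbb{Z}$. *)

theory Defs
  imports "HOL-Analysis.Analysis" "HOL-Algebra.Group"
begin

definition pseudo_jensen ::
  "('a, 'b) monoid_scheme \<Rightarrow> ('a \<Rightarrow> 'e::real_normed_vector) \<Rightarrow> bool" where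
  "pseudo_jensen G g \<longleftrightarrow>
     (\<exists>d>0. \<forall>x\<in>carrier G. \<forall>y\<in>carrier G.
        norm (g (x \<otimes>\<^bsub>G\<^esub> y) + g (x \<otimes>\<^bsub>G\<^esub> inv\<^bsub>G\<^esub> y) - 2 *\<^sub>R g x) \<le> d) \<and>
     (\<forall>x\<in>carrier G. \<forall>n::int. g (x [^]\<^bsub>G\<^esub> n) = of_int n *\<^sub>R g x)"

end

theory Submission
  imports Defs
begin

(* Taking y = x in the hypothesis gives |f(x^2) - 2 f(x)| <= c + |f(1)|, so consecutive
   dyadic quotients f(x^(2^k)) / 2^k differ by at most (c + |f(1)|) / 2^(k+1): they converge,
   and the limit stays within c + |f(1)| of f (Hyers' argument).  For commuting u, v the
   Jensen defect of f at (u^(2^k), v^(2^k)), divided by 2^k, tends to zero, so the limit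
   satisfies the Jensen equation exactly on each cyclic subgroup; together with its value 0
   at the identity this makes it homogeneous on integer powers.  Being at bounded distance
   from f, it also inherits a bounded Jensen defect. *)

lemma convergent_dyadic_increments:
  fixes a :: "nat \<Rightarrow> 'a::banach"
  assumes incr: "\<And>k. norm (a (Suc k) - a k) \<le> C / 2 ^ Suc k"
  shows "convergent a" and "norm (lim a - a 0) \<le> C"
proof -
  define d where "d k = a (Suc k) - a k" for k
  have geom: "(\<lambda>k. C / 2 ^ Suc k) sums C"
    using sums_mult[OF power_half_series, of C] by (simp add: power_one_over)
  have norm_d: "summable (\<lambda>k. norm (d k))"
    by (rule summable_comparison_test'[OF sums_summable[OF geom]]) (simp add: d_def incr del: power_Suc)
  have "(\<lambda>n. a 0 + (\<Sum>k<n. d k)) \<longlonglongrightarrow> a 0 + suminf d"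
    using summable_norm_cancel[OF norm_d] by (intro tendsto_add tendsto_const summable_LIMSEQ)
  moreover have "a 0 + (\<Sum>k<n. d k) = a n" for n
    unfolding d_def sum_lessThan_telescope by simp
  ultimately have lim: "a \<longlonglongrightarrow> a 0 + suminf d" by simp
  then show "convergent a" by (rule convergentI)
  have "norm (suminf d) \<le> (\<Sum>k. norm (d k))"
    by (rule summable_norm[OF norm_d])
  also have "\<dots> \<le> (\<Sum>k. C / 2 ^ Suc k)"
    using norm_d sums_summable[OF geom] by (intro suminf_le) (simp_all add: d_def incr del: power_Suc)
  also have "\<dots> = C"
    using geom by (simp add: sums_iff)
  finally show "norm (lim a - a 0) \<le> C"
    using limI[OF lim] by simp
qed

lemma linear_if_second_difference_zero:
  fixes g :: "int \<Rightarrow> 'a::real_vector"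
  assumes zero: "g 0 = 0" and second_diff: "\<And>m. g (m + 1) + g (m - 1) = 2 *\<^sub>R g m"
  shows "g n = of_int n *\<^sub>R g 1"
proof -
  have step: "g (m + 1) - g m = g m - g (m - 1)" for m
    using second_diff[of m] by (simp add: scaleR_2 algebra_simps)
  have first_diff: "g (m + 1) - g m = g 1" for m
  proof (induction m rule: int_induct[where k = 0])
    case base
    then show ?case using zero by simp
  next
    case (step1 i)
    then show ?case using step[of "i + 1"] by simp
  next
    case (step2 i)
    then show ?case using step[of i] by simp
  qed
  show ?thesis
  proof (induction n rule: int_induct[where k = 0])
    case base
    then show ?case using zero by simp
  next
    case (step1 i)
    then show ?case using first_diff[of i] by (simp add: algebra_simps)
  next
    case (step2 i)
    then show ?case using first_diff[of "i - 1"] by (simp add: algebra_simps)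
  qed
qed

definition dyadic_quotients ::
  "('a, 'b) monoid_scheme \<Rightarrow> ('a \<Rightarrow> 'e::real_normed_vector) \<Rightarrow> 'a \<Rightarrow> nat \<Rightarrow> 'e" where
  "dyadic_quotients G f x = (\<lambda>k. (1 / 2 ^ k) *\<^sub>R f (x [^]\<^bsub>G\<^esub> ((2::nat) ^ k)))"

(* The paper's f-hat; lim returns an unspecified value where the quotients diverge. *)
definition dyadic_limit ::
  "('a, 'b) monoid_scheme \<Rightarrow> ('a \<Rightarrow> 'e::real_normed_vector) \<Rightarrow> 'a \<Rightarrow> 'e" where
  "dyadic_limit G f = (\<lambda>x. lim (dyadic_quotients G f x))"

lemma (in monoid) dyadic_quotients_Suc_diff:
  fixes f :: "'a \<Rightarrow> 'e::real_normed_vector"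
  assumes "x \<in> carrier G"
  shows "dyadic_quotients G f x (Suc k) - dyadic_quotients G f x k =
           (1 / 2 ^ Suc k) *\<^sub>R (f ((x [^] (2::nat) ^ k) [^] (2::nat)) - 2 *\<^sub>R f (x [^] (2::nat) ^ k))"
  using assms by (simp add: dyadic_quotients_def nat_pow_pow mult.commute scaleR_diff_right)

lemma (in monoid) dyadic_quotients_convergent:
  fixes f :: "'a \<Rightarrow> 'e::banach"
  assumes square: "\<And>x. x \<in> carrier G \<Longrightarrow> norm (f (x [^] (2::nat)) - 2 *\<^sub>R f x) \<le> C"
    and x: "x \<in> carrier G"
  shows "convergent (dyadic_quotients G f x)"
    and "norm (dyadic_limit G f x - f x) \<le> C"
proof -
  have "norm (dyadic_quotients G f x (Suc k) - dyadic_quotients G f x k) \<le> C / 2 ^ Suc k" for k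
    using square[of "x [^] (2::nat) ^ k"] x
    by (simp add: dyadic_quotients_Suc_diff divide_right_mono)
  note increments = convergent_dyadic_increments[OF this]
  show "convergent (dyadic_quotients G f x)"
    by (rule increments(1))
  have "dyadic_quotients G f x 0 = f x"
    using x by (simp add: dyadic_quotients_def)
  with increments(2) show "norm (dyadic_limit G f x - f x) \<le> C"
    by (simp add: dyadic_limit_def)
qed

lemma (in monoid) dyadic_limit_one: "dyadic_limit G f \<one> = 0"
proof -
  have "dyadic_quotients G f \<one> = (\<lambda>k. (1 / 2) ^ k *\<^sub>R f \<one>)"
    by (simp add: fun_eq_iff dyadic_quotients_def power_one_over)
  moreover have "(\<lambda>k. (1 / 2) ^ k *\<^sub>R f \<one>) \<longlonglongrightarrow> 0"
    using tendsto_scaleR[OF LIMSEQ_realpow_zero tendsto_const, of "1/2" "f \<one>"] by simp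
  ultimately show ?thesis
    by (simp add: dyadic_limit_def limI)
qed

lemma (in group) norm_square_defect_le:
  assumes jensen: "\<forall>x\<in>carrier G. \<forall>y\<in>carrier G. norm (f (x \<otimes> y) + f (x \<otimes> inv y) - 2 *\<^sub>R f x) \<le> c"
    and x: "x \<in> carrier G"
  shows "norm (f (x [^] (2::nat)) - 2 *\<^sub>R f x) \<le> c + norm (f \<one>)"
proof -
  have "f (x [^] (2::nat)) - 2 *\<^sub>R f x = (f (x \<otimes> x) + f (x \<otimes> inv x) - 2 *\<^sub>R f x) - f \<one>"
    using x by (simp add: numeral_2_eq_2)
  also have "norm \<dots> \<le> norm (f (x \<otimes> x) + f (x \<otimes> inv x) - 2 *\<^sub>R f x) + norm (f \<one>)"
    by (rule norm_triangle_ineq4)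
  also have "\<dots> \<le> c + norm (f \<one>)"
    using jensen[rule_format, OF x x] by simp
  finally show ?thesis .
qed

lemma (in group) dyadic_limit_jensen_commuting:
  assumes jensen: "\<forall>x\<in>carrier G. \<forall>y\<in>carrier G. norm (f (x \<otimes> y) + f (x \<otimes> inv y) - 2 *\<^sub>R f x) \<le> c"
    and conv: "\<And>x. x \<in> carrier G \<Longrightarrow> convergent (dyadic_quotients G f x)"
    and u: "u \<in> carrier G" and v: "v \<in> carrier G" and comm: "u \<otimes> v = v \<otimes> u"
  shows "dyadic_limit G f (u \<otimes> v) + dyadic_limit G f (u \<otimes> inv v) = 2 *\<^sub>R dyadic_limit G f u"
proof -
  let ?q = "dyadic_quotients G f"
  define s where "s k = ?q (u \<otimes> v) k + ?q (u \<otimes> inv v) k - 2 *\<^sub>R ?q u k" for k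
  have lim: "?q x \<longlonglongrightarrow> dyadic_limit G f x" if "x \<in> carrier G" for x
    using conv[OF that] by (simp add: dyadic_limit_def convergent_LIMSEQ_iff)
  have "s \<longlonglongrightarrow> dyadic_limit G f (u \<otimes> v) + dyadic_limit G f (u \<otimes> inv v) - 2 *\<^sub>R dyadic_limit G f u"
    unfolding s_def using u v by (intro tendsto_diff tendsto_add tendsto_scaleR tendsto_const lim) auto
  moreover have "s \<longlonglongrightarrow> 0"
  proof (rule Lim_null_comparison)
    have comm_inv: "u \<otimes> inv v = inv v \<otimes> u"
      using u v comm by (metis inv_closed inv_solve_left inv_solve_right m_assoc m_closed)
    show "\<forall>\<^sub>F k in sequentially. norm (s k) \<le> c * (1 / 2) ^ k"
    proof (intro always_eventually allI)
      fix k
      let ?n = "(2::nat) ^ k"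
      have "s k = (1 / 2 ^ k) *\<^sub>R
                    (f (u [^] ?n \<otimes> v [^] ?n) + f (u [^] ?n \<otimes> inv (v [^] ?n)) - 2 *\<^sub>R f (u [^] ?n))"
        using u v
        by (simp add: s_def dyadic_quotients_def pow_mult_distrib[OF comm u v]
            pow_mult_distrib[OF comm_inv u] nat_pow_inv scaleR_diff_right scaleR_add_right)
      then show "norm (s k) \<le> c * (1 / 2) ^ k"
        using jensen u v by (simp add: power_one_over divide_right_mono)
    qed
    show "(\<lambda>k. c * (1 / 2) ^ k) \<longlonglongrightarrow> 0"
      using tendsto_mult_right_zero[OF LIMSEQ_realpow_zero, of "1/2" c] by simp
  qed
  ultimately show ?thesis
    using LIMSEQ_unique by fastforce
qed

lemma (in group) dyadic_limit_int_pow: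
  assumes jensen: "\<forall>x\<in>carrier G. \<forall>y\<in>carrier G. norm (f (x \<otimes> y) + f (x \<otimes> inv y) - 2 *\<^sub>R f x) \<le> c"
    and conv: "\<And>x. x \<in> carrier G \<Longrightarrow> convergent (dyadic_quotients G f x)"
    and x: "x \<in> carrier G"
  shows "dyadic_limit G f (x [^] n) = of_int n *\<^sub>R dyadic_limit G f x"
proof -
  have second_diff: "dyadic_limit G f (x [^] (m + 1)) + dyadic_limit G f (x [^] (m - 1)) =
                       2 *\<^sub>R dyadic_limit G f (x [^] m)" for m :: int
  proof -
    have plus: "x [^] (m + 1) = x [^] m \<otimes> x" and minus: "x [^] (m - 1) = x [^] m \<otimes> inv x"
      using x by (simp_all add: int_pow_mult int_pow_diff)
    have "x [^] m \<otimes> x = x \<otimes> x [^] m"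
      using x by (metis int_pow_1 int_pow_mult add.commute)
    then show ?thesis
      unfolding plus minus using x by (intro dyadic_limit_jensen_commuting[OF jensen conv]) auto
  qed
  have "dyadic_limit G f (x [^] (0::int)) = 0"
    using dyadic_limit_one by simp
  from linear_if_second_difference_zero[of "\<lambda>m. dyadic_limit G f (x [^] m)", OF this second_diff]
  show ?thesis
    using x by simp
qed

lemma (in group) jensen_defect_perturbation:
  fixes f g :: "'a \<Rightarrow> 'e::real_normed_vector"
  assumes jensen: "\<forall>x\<in>carrier G. \<forall>y\<in>carrier G. norm (f (x \<otimes> y) + f (x \<otimes> inv y) - 2 *\<^sub>R f x) \<le> c"
    and close: "\<And>x. x \<in> carrier G \<Longrightarrow> norm (g x - f x) \<le> C"
    and x: "x \<in> carrier G" and y: "y \<in> carrier G"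
  shows "norm (g (x \<otimes> y) + g (x \<otimes> inv y) - 2 *\<^sub>R g x) \<le> c + 4 * C"
proof -
  have triangle: "norm (a + b + e - 2 *\<^sub>R d) \<le> norm a + norm b + norm e + 2 * norm d" for a b e d :: 'e
    using norm_triangle_ineq4[of "a + b + e" "2 *\<^sub>R d"] norm_triangle_ineq[of "a + b" e]
      norm_triangle_ineq[of a b]
    by simp
  have "g (x \<otimes> y) + g (x \<otimes> inv y) - 2 *\<^sub>R g x =
          (f (x \<otimes> y) + f (x \<otimes> inv y) - 2 *\<^sub>R f x) + (g (x \<otimes> y) - f (x \<otimes> y))
          + (g (x \<otimes> inv y) - f (x \<otimes> inv y)) - 2 *\<^sub>R (g x - f x)"
    by (simp add: algebra_simps)
  also have "norm \<dots> \<le> norm (f (x \<otimes> y) + f (x \<otimes> inv y) - 2 *\<^sub>R f x) + norm (g (x \<otimes> y) - f (x \<otimes> y))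
                        + norm (g (x \<otimes> inv y) - f (x \<otimes> inv y)) + 2 * norm (g x - f x)"
    by (rule triangle)
  also have "\<dots> \<le> c + C + C + 2 * C"
    using jensen[rule_format, OF x y] close[OF m_closed[OF x y]] close[OF m_closed[OF x inv_closed[OF y]]]
      close[OF x]
    by linarith
  finally show ?thesis by simp
qed

lemma (in group) dyadic_limit_approximation:
  fixes f :: "'a \<Rightarrow> 'e::banach"
  assumes jensen: "\<forall>x\<in>carrier G. \<forall>y\<in>carrier G. norm (f (x \<otimes> y) + f (x \<otimes> inv y) - 2 *\<^sub>R f x) \<le> c"
    and x: "x \<in> carrier G"
  shows "convergent (dyadic_quotients G f x)"
    and "norm (dyadic_limit G f x - f x) \<le> c + norm (f \<one>)"
  using dyadic_quotients_convergent[of f "c + norm (f \<one>)", OF norm_square_defect_le[OF jensen] x]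
  by simp_all

lemma (in group) dyadic_limit_pseudo_jensen:
  fixes f :: "'a \<Rightarrow> 'e::banach"
  assumes jensen: "\<forall>x\<in>carrier G. \<forall>y\<in>carrier G. norm (f (x \<otimes> y) + f (x \<otimes> inv y) - 2 *\<^sub>R f x) \<le> c"
    and "c > 0"
  shows "pseudo_jensen G (dyadic_limit G f)"
  unfolding pseudo_jensen_def
proof (intro conjI exI[of _ "c + 4 * (c + norm (f \<one>))"] ballI allI)
  show "0 < c + 4 * (c + norm (f \<one>))"
    using \<open>c > 0\<close> by (simp add: add_pos_nonneg)
  show "norm (dyadic_limit G f (x \<otimes> y) + dyadic_limit G f (x \<otimes> inv y) - 2 *\<^sub>R dyadic_limit G f x)
          \<le> c + 4 * (c + norm (f \<one>))" if "x \<in> carrier G" "y \<in> carrier G" for x y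
    using jensen_defect_perturbation[OF jensen dyadic_limit_approximation(2)[OF jensen] that] .
  show "dyadic_limit G f (x [^] n) = of_int n *\<^sub>R dyadic_limit G f x" if "x \<in> carrier G" for x and n :: int
    using dyadic_limit_int_pow[OF jensen dyadic_limit_approximation(1)[OF jensen] that] .
qed

theorem lemma2p8:
  fixes G :: "('a, 'b) monoid_scheme" and f :: "'a \<Rightarrow> 'e::banach" and c :: real
  assumes "group G"
    and "c > 0"
    and "\<forall>x\<in>carrier G. \<forall>y\<in>carrier G.
           norm (f (x \<otimes>\<^bsub>G\<^esub> y) + f (x \<otimes>\<^bsub>G\<^esub> inv\<^bsub>G\<^esub> y) - 2 *\<^sub>R f x) \<le> c"
  shows "(\<forall>x\<in>carrier G. convergent (\<lambda>k::nat. (1 / 2 ^ k) *\<^sub>R f (x [^]\<^bsub>G\<^esub> ((2::nat) ^ k))))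
       \<and> pseudo_jensen G (\<lambda>x. lim (\<lambda>k::nat. (1 / 2 ^ k) *\<^sub>R f (x [^]\<^bsub>G\<^esub> ((2::nat) ^ k))))
       \<and> (\<forall>x\<in>carrier G.
            norm (lim (\<lambda>k::nat. (1 / 2 ^ k) *\<^sub>R f (x [^]\<^bsub>G\<^esub> ((2::nat) ^ k))) - f x)
              \<le> c + norm (f \<one>\<^bsub>G\<^esub>))"
proof -
  interpret group G by fact
  have "\<forall>x\<in>carrier G. convergent (dyadic_quotients G f x)"
    and "pseudo_jensen G (dyadic_limit G f)"
    and "\<forall>x\<in>carrier G. norm (dyadic_limit G f x - f x) \<le> c + norm (f \<one>\<^bsub>G\<^esub>)"
    using dyadic_limit_approximation[OF assms(3)] dyadic_limit_pseudo_jensen[OF assms(3,2)]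
    by simp_all
  then show ?thesis
    unfolding dyadic_limit_def dyadic_quotients_def by simp
qed

end
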